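(* Let $W\in\mathbb{D}_n$ be a Dale matrix with excitatory neurons $\mathcal{E}$ and inhibitory neurons $\mathcal{I}$. Let $m=|\mathcal{E}|+1$, identify the first $m-1$ indices of $[m]$ with $\mathcal{E}$ and let index $m$ be a single inhibitory neuron. Let $W'\in\mathbb{D}_m$ be any Dale matrix (with excitatory set $\mathcal{E}$ and inhibitory set $\{m\}$) such that $W'_{\mathcal{E}}=W_{\mathcal{E}}$ (the principal submatrices on $\mathcal{E}$ agree) and, for all $i\in\mathcal{E}$, $$W'_{im}=\begin{cases}-1,&\text{if there is } j\in\mathcal{I}\text{ with } W_{ij}\neq 0,\\ 0,&\text{if } W_{ij}=0 \text{ for all } j\in\mathcal{I}.\end{cases}$$ Assume both $W$ and $W'$ satisfy the Ground Assumption. Then $\mathcal{C}(W)=\mathcal{C}(W')$.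
   Context: Threshold-linear network: for $W\in\mathbb{R}^{n\times n}$ and $b\in\mathbb{R}^n$, the dynamics are $\dot x_i=-x_i+[\sum_{j=1}^n W_{ij}x_j+b_i]_+$, $i=1,\dots,n$, where $[y]_+=\max(0,y)$. A fixed point is $x^*\in\mathbb{R}^n$ with $x^*=[Wx^*+b]_+$ (componentwise). A Dale matrix $W\in\mathbb{D}_n$ is an $n\times n$ real matrix together with a partition $[n]=\mathcal{E}\sqcup\mathcal{I}$ into excitatory and inhibitory neurons such that $W_{ii}=0$ for all $i$, $W_{ji}\ge 0$ for all $j$ whenever $i\in\mathcal{E}$, and $W_{ji}\le 0$ for all $j$ whenever $i\in\mathcal{I}$. Ground Assumption: for every nonempty $\sigma\subset[n]$ the principal submatrix $(I-W)_\sigma$ is nonsingular. For $x\in\mathbb{R}^n_{\ge0}$, its excitatory support is $\mathrm{supp}_+x=\{i\in\mathcal{E}: x_i>0\}$. The combinatorial code of $W$ is $\mathcal{C}(W)=\{\mathrm{supp}_+x^*\;:\; b\in\mathbb{R}^n_{\ge0},\ x^*\in\mathbb{R}^n_{\ge 0}\text{ a fixed point of the network }(W,b)\}$. For $\sigma\subset[n]$, $A_\sigma$ denotes the principal submatrix of $A$ on rows and columns $\sigma$. *)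

theory Defs
  imports "HOL-Analysis.Analysis"
begin

text \<open>Matrices are indexed by a finite index set S (neurons); W i j is the entry in row i,
  column j. Vectors are functions on indices; only values on S matter.\<close>

definition dale_matrix :: "'a set \<Rightarrow> 'a set \<Rightarrow> ('a \<Rightarrow> 'a \<Rightarrow> real) \<Rightarrow> bool" where
  "dale_matrix S E W \<longleftrightarrow> finite S \<and> E \<subseteq> S \<and>
     (\<forall>i\<in>S. W i i = 0) \<and>
     (\<forall>i\<in>E. \<forall>j\<in>S. W j i \<ge> 0) \<and>
     (\<forall>i\<in>S - E. \<forall>j\<in>S. W j i \<le> 0)"

definition det_on :: "'a set \<Rightarrow> ('a \<Rightarrow> 'a \<Rightarrow> real) \<Rightarrow> real" where
  "det_on \<sigma> A = (\<Sum>p\<in>{p. p permutes \<sigma>}. of_int (sign p) * (\<Prod>i\<in>\<sigma>. A i (p i)))"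

definition ground_assumption :: "'a set \<Rightarrow> ('a \<Rightarrow> 'a \<Rightarrow> real) \<Rightarrow> bool" where
  "ground_assumption S W \<longleftrightarrow>
     (\<forall>\<sigma>. \<sigma> \<noteq> {} \<and> \<sigma> \<subseteq> S \<longrightarrow>
        det_on \<sigma> (\<lambda>i j. (if i = j then 1 else 0) - W i j) \<noteq> 0)"

definition is_fixed_point :: "'a set \<Rightarrow> ('a \<Rightarrow> 'a \<Rightarrow> real) \<Rightarrow> ('a \<Rightarrow> real) \<Rightarrow> ('a \<Rightarrow> real) \<Rightarrow> bool" where
  "is_fixed_point S W b x \<longleftrightarrow>
     (\<forall>i\<in>S. x i = max 0 ((\<Sum>j\<in>S. W i j * x j) + b i))"

definition exc_support :: "'a set \<Rightarrow> ('a \<Rightarrow> real) \<Rightarrow> 'a set" where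
  "exc_support E x = {i\<in>E. x i > 0}"

definition comb_code :: "'a set \<Rightarrow> 'a set \<Rightarrow> ('a \<Rightarrow> 'a \<Rightarrow> real) \<Rightarrow> 'a set set" where
  "comb_code S E W = {exc_support E x | x b.
      (\<forall>i\<in>S. b i \<ge> 0) \<and> (\<forall>i\<in>S. x i \<ge> 0) \<and> is_fixed_point S W b x}"

end

theory Submission
  imports Defs
begin

text \<open>Since the inputs b are only required to be nonnegative, a nonnegative x is a fixed point
  for some admissible b exactly when x \<ge> W x, the slack being the input. For a Dale matrix the
  inhibitory coordinates of such an x can be made arbitrarily large: this never hurts an
  inhibitory inequality, and it makes every excitatory inequality of a neuron receiving some
  inhibition hold. Hence the code only records which excitatory neurons receive inhibition at all,
  together with the excitatory block of W, and both are shared by W and W'.\<close>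

definition subinvariant :: "'a set \<Rightarrow> ('a \<Rightarrow> 'a \<Rightarrow> real) \<Rightarrow> ('a \<Rightarrow> real) \<Rightarrow> bool" where
  "subinvariant S W x \<longleftrightarrow> (\<forall>i\<in>S. 0 \<le> x i \<and> (\<Sum>j\<in>S. W i j * x j) \<le> x i)"

definition uninhibited :: "'a set \<Rightarrow> 'a set \<Rightarrow> ('a \<Rightarrow> 'a \<Rightarrow> real) \<Rightarrow> 'a set" where
  "uninhibited S E W = {i\<in>E. \<forall>j\<in>S - E. W i j = 0}"

definition exc_subinvariant :: "'a set \<Rightarrow> 'a set \<Rightarrow> ('a \<Rightarrow> 'a \<Rightarrow> real) \<Rightarrow> ('a \<Rightarrow> real) \<Rightarrow> bool" where
  "exc_subinvariant S E W x \<longleftrightarrow>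
     (\<forall>i\<in>E. 0 \<le> x i) \<and> (\<forall>i\<in>uninhibited S E W. (\<Sum>j\<in>E. W i j * x j) \<le> x i)"

lemma exc_support_cong: "\<forall>i\<in>E. x i = y i \<Longrightarrow> exc_support E x = exc_support E y"
  unfolding exc_support_def by auto

lemma comb_code_eq_subinvariant:
  "comb_code S E W = exc_support E ` Collect (subinvariant S W)"
proof (intro equalityI subsetI)
  fix \<sigma> assume "\<sigma> \<in> comb_code S E W"
  then obtain x b where \<sigma>: "\<sigma> = exc_support E x" and b: "\<forall>i\<in>S. b i \<ge> 0"
    and fp: "is_fixed_point S W b x"
    unfolding comb_code_def by blast
  have "subinvariant S W x"
    unfolding subinvariant_def
  proof
    fix i assume "i \<in> S"
    with fp have "x i = max 0 ((\<Sum>j\<in>S. W i j * x j) + b i)"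
      unfolding is_fixed_point_def by blast
    moreover have "b i \<ge> 0" using b \<open>i \<in> S\<close> by blast
    ultimately show "0 \<le> x i \<and> (\<Sum>j\<in>S. W i j * x j) \<le> x i" by linarith
  qed
  with \<sigma> show "\<sigma> \<in> exc_support E ` Collect (subinvariant S W)" by blast
next
  fix \<sigma> assume "\<sigma> \<in> exc_support E ` Collect (subinvariant S W)"
  then obtain x where \<sigma>: "\<sigma> = exc_support E x" and x: "subinvariant S W x" by blast
  define b where "b i = x i - (\<Sum>j\<in>S. W i j * x j)" for i
  have "\<forall>i\<in>S. b i \<ge> 0" and x_nonneg: "\<forall>i\<in>S. x i \<ge> 0"
    using x unfolding subinvariant_def b_def by simp_all
  moreover have "is_fixed_point S W b x"
    using x_nonneg unfolding is_fixed_point_def b_def by simp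
  ultimately show "\<sigma> \<in> comb_code S E W"
    using \<sigma> unfolding comb_code_def by blast
qed

lemma subinvariant_imp_exc_subinvariant:
  assumes "finite S" "E \<subseteq> S" "subinvariant S W x"
  shows "exc_subinvariant S E W x"
  unfolding exc_subinvariant_def
proof (intro conjI ballI)
  fix i assume "i \<in> E"
  then show "0 \<le> x i" using assms unfolding subinvariant_def by blast
next
  fix i assume i: "i \<in> uninhibited S E W"
  then have "i \<in> S"
    using assms(2) unfolding uninhibited_def by blast
  have "(\<Sum>j\<in>E. W i j * x j) = (\<Sum>j\<in>S - E. W i j * x j) + (\<Sum>j\<in>E. W i j * x j)"
    using i unfolding uninhibited_def by simp
  also have "\<dots> = (\<Sum>j\<in>S. W i j * x j)"
    by (rule sum.subset_diff[OF assms(2,1), symmetric])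
  also have "\<dots> \<le> x i"
    using assms(3) \<open>i \<in> S\<close> unfolding subinvariant_def by blast
  finally show "(\<Sum>j\<in>E. W i j * x j) \<le> x i" .
qed

lemma dale_inhibitory_row_sum_nonpos:
  assumes "dale_matrix S E W" "i \<in> S"
  shows "(\<Sum>j\<in>S - E. W i j) \<le> 0"
  using assms unfolding dale_matrix_def by (intro sum_nonpos) auto

lemma dale_inhibitory_row_sum_neg:
  assumes "dale_matrix S E W" "i \<in> E - uninhibited S E W"
  shows "(\<Sum>j\<in>S - E. W i j) < 0"
proof -
  have fin: "finite (S - E)" and nonpos: "\<forall>j\<in>S - E. W i j \<le> 0"
    using assms unfolding dale_matrix_def by auto
  obtain j0 where j0: "j0 \<in> S - E" "W i j0 \<noteq> 0"
    using assms(2) unfolding uninhibited_def by auto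
  have "(\<Sum>j\<in>S - E. W i j) = W i j0 + (\<Sum>j\<in>S - E - {j0}. W i j)"
    using fin j0(1) by (rule sum.remove)
  moreover have "(\<Sum>j\<in>S - E - {j0}. W i j) \<le> 0"
    using nonpos by (intro sum_nonpos) auto
  moreover have "W i j0 < 0"
    using nonpos j0 by (simp add: less_le)
  ultimately show ?thesis by linarith
qed

lemma exc_subinvariant_extend:
  assumes dale: "dale_matrix S E W" and x: "exc_subinvariant S E W x"
  obtains x' where "subinvariant S W x'" and "\<forall>i\<in>E. x' i = x i"
proof -
  have fin: "finite S" and "E \<subseteq> S"
    using dale unfolding dale_matrix_def by auto
  define s where "s i = (\<Sum>j\<in>E. W i j * x j)" for i
  define c where "c i = (\<Sum>j\<in>S - E. W i j)" for i
  define y where "y M j = (if j \<in> E then x j else M)" for M j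
  have input: "(\<Sum>j\<in>S. W i j * y M j) = s i + M * c i" for i M
    using sum.subset_diff[OF \<open>E \<subseteq> S\<close> fin, of "\<lambda>j. W i j * y M j"]
    unfolding s_def c_def y_def by (simp add: sum_distrib_left mult.commute)
  have "\<forall>\<^sub>F M in at_top. subinvariant S W (y M)"
    unfolding subinvariant_def input
  proof (intro eventually_ball_finite[OF fin] ballI)
    fix i assume "i \<in> S"
    then have c_nonpos: "c i \<le> 0"
      unfolding c_def by (rule dale_inhibitory_row_sum_nonpos[OF dale])
    consider "i \<notin> E" | "i \<in> uninhibited S E W" | "i \<in> E - uninhibited S E W" by blast
    then show "\<forall>\<^sub>F M in at_top. 0 \<le> y M i \<and> s i + M * c i \<le> y M i"
    proof cases
      case 1
      have "0 \<le> y M i \<and> s i + M * c i \<le> y M i" if "max 0 (s i) \<le> M" for M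
        using 1 that c_nonpos mult_nonneg_nonpos[of M "c i"] unfolding y_def by auto
      then show ?thesis by (rule eventually_at_top_linorderI)
    next
      case 2
      then have "c i = 0" unfolding c_def uninhibited_def by simp
      with 2 x show ?thesis
        unfolding y_def s_def exc_subinvariant_def uninhibited_def by simp
    next
      case 3
      have c_neg: "c i < 0"
        unfolding c_def by (rule dale_inhibitory_row_sum_neg[OF dale 3])
      have "0 \<le> y M i \<and> s i + M * c i \<le> y M i" if "(s i - x i) / - c i \<le> M" for M
      proof -
        have "s i - x i \<le> M * - c i"
          using that pos_divide_le_eq[of "- c i"] c_neg by simp
        then show ?thesis using 3 x unfolding y_def exc_subinvariant_def by auto
      qed
      then show ?thesis by (rule eventually_at_top_linorderI)
    qed
  qed
  then obtain M where "subinvariant S W (y M)"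
    unfolding eventually_at_top_linorder by blast
  then show thesis
    using that[of "y M"] unfolding y_def by simp
qed

lemma comb_code_dale:
  assumes "dale_matrix S E W"
  shows "comb_code S E W = exc_support E ` Collect (exc_subinvariant S E W)"
  unfolding comb_code_eq_subinvariant
proof (intro equalityI subsetI)
  fix \<sigma> assume "\<sigma> \<in> exc_support E ` Collect (subinvariant S W)"
  then show "\<sigma> \<in> exc_support E ` Collect (exc_subinvariant S E W)"
    using subinvariant_imp_exc_subinvariant assms unfolding dale_matrix_def by blast
next
  fix \<sigma> assume "\<sigma> \<in> exc_support E ` Collect (exc_subinvariant S E W)"
  then obtain x where \<sigma>: "\<sigma> = exc_support E x" and "exc_subinvariant S E W x" by blast
  then obtain x' where "subinvariant S W x'" and "\<forall>i\<in>E. x' i = x i"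
    using exc_subinvariant_extend[OF assms] by blast
  then show "\<sigma> \<in> exc_support E ` Collect (subinvariant S W)"
    using \<sigma> exc_support_cong[of E x' x] by blast
qed

theorem mainTheorem1:
  fixes S E :: "'a set" and k :: 'a and W W' :: "'a \<Rightarrow> 'a \<Rightarrow> real"
  assumes "dale_matrix S E W"
    and "k \<notin> E"
    and "dale_matrix (E \<union> {k}) E W'"
    and "\<forall>i\<in>E. \<forall>j\<in>E. W' i j = W i j"
    and "\<forall>i\<in>E. W' i k = (if \<exists>j\<in>S - E. W i j \<noteq> 0 then -1 else 0)"
    and "ground_assumption S W"
    and "ground_assumption (E \<union> {k}) W'"
  shows "comb_code S E W = comb_code (E \<union> {k}) E W'"
proof -
  have "(E \<union> {k}) - E = {k}" using assms(2) by auto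
  then have "uninhibited (E \<union> {k}) E W' = uninhibited S E W"
    using assms(5) unfolding uninhibited_def by (auto split: if_splits)
  moreover have "(\<Sum>j\<in>E. W' i j * x j) = (\<Sum>j\<in>E. W i j * x j)" if "i \<in> E" for i x
    using assms(4) that by (intro sum.cong) auto
  ultimately have "exc_subinvariant (E \<union> {k}) E W' = exc_subinvariant S E W"
    unfolding exc_subinvariant_def uninhibited_def by (auto simp: fun_eq_iff)
  then show ?thesis
    using comb_code_dale[OF assms(1)] comb_code_dale[OF assms(3)] by simp
qed

end
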